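(* Let $N\ge1$ and $j\in\{1,\dots,N\}$. For non-negative SNRs define $$h_j=\mathsf{SNR}_{s,j}+\frac{\mathsf{SNR}_{r,j}\,\mathsf{SNR}_{s,r}}{\mathsf{SNR}_{s,j}+\mathsf{SNR}_{r,j}+\mathsf{SNR}_{s,r}+1}.$$ Then for each fixed $\mathsf{SNR}_{s,j}\ge0$, $h_j$ is quasi-concave as a function of $(\mathsf{SNR}_{r,j},\mathsf{SNR}_{s,r})\in[0,\infty)^2$.
   Context: $h_j$ is the effective SNR at destination $j$ of a quantize-forward scheme in a real AWGN multicast relay channel with source $s$, relay $r$, destinations $1,\dots,N$ and link SNRs $\mathsf{SNR}_{u,v}\ge0$. A function $F$ on a convex set is quasi-concave if $F(\lambda x_1+(1-\lambda)x_2)\ge\min(F(x_1),F(x_2))$ for all $x_1,x_2$ and $\lambda\in[0,1]$. *)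

theory Defs
  imports "HOL-Analysis.Analysis"
begin

definition quasi_concave_on :: "('a::real_vector) set \<Rightarrow> ('a \<Rightarrow> real) \<Rightarrow> bool" where
  "quasi_concave_on S F \<longleftrightarrow> convex S \<and>
     (\<forall>x1\<in>S. \<forall>x2\<in>S. \<forall>t::real. 0 \<le> t \<and> t \<le> 1 \<longrightarrow>
        F (t *\<^sub>R x1 + (1 - t) *\<^sub>R x2) \<ge> min (F x1) (F x2))"

definition h_eff :: "real \<Rightarrow> real \<Rightarrow> real \<Rightarrow> real" where
  "h_eff snr_sj snr_rj snr_sr =
     snr_sj + snr_rj * snr_sr / (snr_sj + snr_rj + snr_sr + 1)"

end

theory Submission
  imports Defs
begin

text \<open>Write \<open>h = a + xy / (x + y + b)\<close> with \<open>a = SNR\<^sub>s\<^sub>j\<close> and \<open>b = a + 1 > 0\<close>. For \<open>m > 0\<close>,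
  on the quadrant \<open>xy / (x + y + b) \<ge> m\<close> is equivalent to \<open>x > m, y > m, (x - m)(y - m) \<ge> m (b + m)\<close>,
  so the superlevel set \<open>{h \<ge> a + m}\<close> is a translate of the convex region above a branch of a
  hyperbola; for \<open>m \<le> 0\<close> it is the whole quadrant. Convex superlevel sets give quasi-concavity.\<close>

lemma quasi_concave_onI_convex_superlevel:
  assumes "convex S" and "\<And>c. convex {x \<in> S. c \<le> F x}"
  shows "quasi_concave_on S F"
  unfolding quasi_concave_on_def
proof (intro conjI assms(1) ballI allI impI)
  fix x1 x2 and t :: real
  assume "x1 \<in> S" "x2 \<in> S" and t: "0 \<le> t \<and> t \<le> 1"
  then have "x1 \<in> {x \<in> S. min (F x1) (F x2) \<le> F x}" "x2 \<in> {x \<in> S. min (F x1) (F x2) \<le> F x}"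
    by auto
  with assms(2) t show "min (F x1) (F x2) \<le> F (t *\<^sub>R x1 + (1 - t) *\<^sub>R x2)"
    by (simp add: convex_def)
qed

lemma sum_ge_double_if_mult_ge_square:
  fixes a b K :: real
  assumes "0 \<le> a" "0 \<le> b" "0 \<le> K" "K * K \<le> a * b"
  shows "2 * K \<le> a + b"
proof (rule power2_le_imp_le)
  have "(2 * K)\<^sup>2 \<le> 4 * (a * b)"
    using assms(4) by (simp add: power2_eq_square)
  also have "\<dots> \<le> (a + b)\<^sup>2"
    using sum_squares_ge_zero[of "a - b" 0] by (simp add: power2_eq_square algebra_simps)
  finally show "(2 * K)\<^sup>2 \<le> (a + b)\<^sup>2" .
  show "0 \<le> a + b" using assms by simp
qed

lemma convex_hyperbolic_region:
  fixes K :: real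
  assumes "0 \<le> K"
  shows "convex {p :: real \<times> real. 0 < fst p \<and> 0 < snd p \<and> K \<le> fst p * snd p}"
  unfolding convex_def
proof (clarsimp simp del: mult_pos_pos)
  fix u1 v1 u2 v2 t s :: real
  assume pos: "0 < u1" "0 < v1" "0 < u2" "0 < v2"
    and K1: "K \<le> u1 * v1" and K2: "K \<le> u2 * v2" and t: "0 \<le> t" and s: "0 \<le> s" "t + s = 1"
  have mix_pos: "0 < t * a + s * b" if "0 < a" "0 < b" for a b
  proof (cases "t = 0")
    case False
    with t have "0 < t * a" using that by simp
    with s that show ?thesis by (simp add: add_pos_nonneg)
  qed (use s that in simp)
  have "K * K \<le> (u1 * v2) * (u2 * v1)"
    using K1 K2 assms mult_mono[OF K1 K2] by (simp add: algebra_simps)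
  then have cross: "2 * K \<le> u1 * v2 + u2 * v1"
    using pos assms by (intro sum_ge_double_if_mult_ge_square) auto
  have "K = (t + s)\<^sup>2 * K" using s by simp
  also have "\<dots> = t * t * K + s * s * K + t * s * (2 * K)"
    by (simp add: power2_eq_square algebra_simps)
  also have "\<dots> \<le> t * t * (u1 * v1) + s * s * (u2 * v2) + t * s * (u1 * v2 + u2 * v1)"
    using K1 K2 cross t s by (intro add_mono mult_left_mono) auto
  also have "\<dots> = (t * u1 + s * u2) * (t * v1 + s * v2)"
    by (simp add: algebra_simps)
  finally show "0 < t * u1 + s * u2 \<and> 0 < t * v1 + s * v2 \<and>
      K \<le> (t * u1 + s * u2) * (t * v1 + s * v2)"
    using pos by (auto intro: mix_pos)
qed

lemma gt_if_shifted_mult_gt_square: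
  fixes x y m :: real
  assumes "0 \<le> x" "0 \<le> y" and gt: "m * m < (x - m) * (y - m)"
  shows "m < x \<and> m < y"
proof (rule ccontr)
  assume "\<not> (m < x \<and> m < y)"
  then consider "x \<le> m" "y \<le> m" | "x \<le> m" "m < y" | "m < x" "y \<le> m" by fastforce
  then show False
  proof cases
    case 1
    then have "(m - x) * (m - y) \<le> m * m"
      using assms by (intro mult_mono) auto
    with gt show False by (simp add: algebra_simps)
  next
    case 2
    then have "(x - m) * (y - m) \<le> 0" by (simp add: mult_nonpos_nonneg)
    with gt zero_le_square[of m] show False by linarith
  next
    case 3
    then have "(x - m) * (y - m) \<le> 0" by (simp add: mult_nonneg_nonpos)
    with gt zero_le_square[of m] show False by linarith
  qed
qed

lemma le_ratio_iff_shifted_mult: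
  fixes x y b m :: real
  assumes "0 \<le> x" "0 \<le> y" "0 < b" "0 < m"
  shows "m \<le> x * y / (x + y + b) \<longleftrightarrow> m < x \<and> m < y \<and> m * (b + m) \<le> (x - m) * (y - m)"
proof -
  have "m \<le> x * y / (x + y + b) \<longleftrightarrow> m * (b + m) \<le> (x - m) * (y - m)"
    using assms by (simp add: pos_le_divide_eq algebra_simps)
  moreover have "m * m < m * (b + m)"
    using assms by simp
  then have "m * (b + m) \<le> (x - m) * (y - m) \<Longrightarrow> m < x \<and> m < y"
    by (meson gt_if_shifted_mult_gt_square assms(1,2) less_le_trans)
  ultimately show ?thesis by blast
qed

lemma h_eff_eq_ratio: "h_eff a x y = a + x * y / (x + y + (a + 1))"
  unfolding h_eff_def by (simp add: ac_simps)

lemma convex_superlevel_h_eff: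
  fixes a c :: real
  assumes "0 \<le> a"
  shows "convex {p :: real \<times> real. 0 \<le> fst p \<and> 0 \<le> snd p \<and> c \<le> h_eff a (fst p) (snd p)}"
    (is "convex ?S")
proof (cases "c \<le> a")
  case True
  have "?S = {p. 0 \<le> fst p \<and> 0 \<le> snd p}"
    using True assms by (auto simp: h_eff_eq_ratio intro!: add_increasing2 divide_nonneg_nonneg)
  then show ?thesis
    by (simp add: convex_def add_nonneg_nonneg)
next
  case False
  define m where "m = c - a"
  define H where "H = {p :: real \<times> real. 0 < fst p \<and> 0 < snd p \<and> m * (a + 1 + m) \<le> fst p * snd p}"
  have m: "0 < m" using False by (simp add: m_def)
  have mem: "p \<in> ?S \<longleftrightarrow> p - (m, m) \<in> H" for p
  proof (cases p)
    case (Pair x y)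
    have "c \<le> h_eff a x y \<longleftrightarrow> m \<le> x * y / (x + y + (a + 1))"
      by (simp add: h_eff_eq_ratio m_def algebra_simps)
    moreover have "m < x \<Longrightarrow> 0 \<le> x" "m < y \<Longrightarrow> 0 \<le> y"
      using m by auto
    ultimately show ?thesis
      using Pair le_ratio_iff_shifted_mult[of x y "a + 1" m] assms m
      by (auto simp: H_def)
  qed
  have "?S = (+) (m, m) ` H"
  proof (intro set_eqI iffI)
    fix p
    assume "p \<in> ?S"
    then show "p \<in> (+) (m, m) ` H"
      using mem by (intro image_eqI[of _ _ "p - (m, m)"]) auto
  qed (use mem in auto)
  moreover have "convex H"
    unfolding H_def using m assms by (intro convex_hyperbolic_region) simp
  ultimately show ?thesis
    by (simp add: convex_translation)
qed

theorem lemma2: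
  fixes N j :: nat and snr_sj :: "nat \<Rightarrow> real"
  assumes "N \<ge> 1" and "j \<in> {1..N}" and "snr_sj j \<ge> 0"
  shows "quasi_concave_on {p :: real \<times> real. fst p \<ge> 0 \<and> snd p \<ge> 0}
           (\<lambda>p. h_eff (snr_sj j) (fst p) (snd p))"
proof (rule quasi_concave_onI_convex_superlevel)
  show "convex {p :: real \<times> real. fst p \<ge> 0 \<and> snd p \<ge> 0}"
    by (simp add: convex_def add_nonneg_nonneg)
  show "convex {p \<in> {p :: real \<times> real. fst p \<ge> 0 \<and> snd p \<ge> 0}. c \<le> h_eff (snr_sj j) (fst p) (snd p)}"
    for c
    using convex_superlevel_h_eff[OF assms(3), of c] by (simp add: conj_assoc)
qed

end
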